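(* For every integer $k\ge3$ and every item sequence $I\in(0,1]^n$, $MM_k(I)\le\left(\lambda_k-\frac1k\right)\cdot OPT_k(I)+k$.
   Context: Define $\pi_1=2$, $\pi_{i+1}=\pi_i(\pi_i-1)+1$ for $i\ge1$, and $\lambda_j=\sum_{i=1}^j\max\{\frac{1}{\pi_i-1},\frac1j\}$ for $j\ge1$. The $k$-cardinality constrained bin packing problem: an item sequence $I\in(0,1]^n$ must be packed into bins of capacity $1$ with at most $k$ items per bin; $OPT_k(I)$ is the minimum number of non-empty bins, and $ALG(I)$ the number of non-empty bins used by $ALG$. Algorithm $MM_k$: sort the items in non-increasing order; keep a single open bin with load $S$. Repeat while items remain: if the open bin already contains $k$ items, close it and open a new bin; else if the head (largest remaining) item fits ($S+\text{head}\le1$) pack it; else if the tail (smallest remaining) item fits pack it; else close the open bin permanently and open a new empty bin. *)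

theory Defs
  imports Complex_Main
begin

(* Sylvester sequence, 1-indexed: pi 1 = 2, pi (i+1) = pi i * (pi i - 1) + 1 *)
fun sylv :: "nat \<Rightarrow> nat" where
  "sylv 0 = 2"
| "sylv (Suc i) = sylv i * (sylv i - 1) + 1"

definition pi_seq :: "nat \<Rightarrow> nat" where
  "pi_seq i = sylv (i - 1)"

definition lambda_seq :: "nat \<Rightarrow> real" where
  "lambda_seq j = (\<Sum>i=1..j. max (1 / (real (pi_seq i) - 1)) (1 / real j))"

definition feasible_packing :: "nat \<Rightarrow> real list \<Rightarrow> (nat \<Rightarrow> nat) \<Rightarrow> bool" where
  "feasible_packing k I f \<longleftrightarrow>
     (\<forall>b. card {i. i < length I \<and> f i = b} \<le> k
          \<and> (\<Sum>i\<in>{i. i < length I \<and> f i = b}. I ! i) \<le> 1)"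

definition used_bins :: "real list \<Rightarrow> (nat \<Rightarrow> nat) \<Rightarrow> nat" where
  "used_bins I f = card (f ` {..<length I})"

definition OPT :: "nat \<Rightarrow> real list \<Rightarrow> nat" where
  "OPT k I = (LEAST m. \<exists>f. feasible_packing k I f \<and> used_bins I f = m)"

(* Algorithm MM_k on a non-increasingly sorted list of remaining items.
   S = load of the open bin, cur = contents of the open bin.
   The branch "cur = [] and nothing fits" is unreachable for items in (0,1]
   and only serves to make the function total. *)
function mm_aux :: "nat \<Rightarrow> real \<Rightarrow> real list \<Rightarrow> real list \<Rightarrow> real list list" where
  "mm_aux k S cur [] = [cur]"
| "mm_aux k S cur (x # xs) =
    (if cur \<noteq> [] \<and> length cur \<ge> k then cur # mm_aux k 0 [] (x # xs)
     else if S + x \<le> 1 then mm_aux k (S + x) (x # cur) xs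
     else if S + last (x # xs) \<le> 1
       then mm_aux k (S + last (x # xs)) (last (x # xs) # cur) (butlast (x # xs))
     else if cur = [] then [x # xs]
     else cur # mm_aux k 0 [] (x # xs))"
  by pat_completeness auto
termination
  by (relation "measure (\<lambda>(k, S, cur, xs). 2 * length xs + (if cur = [] then 0 else 1))") auto

definition MM :: "nat \<Rightarrow> real list \<Rightarrow> nat" where
  "MM k I = length (filter (\<lambda>b. b \<noteq> []) (mm_aux k 0 [] (rev (sort I))))"

end

(*
  Items of size more than 1/2 are large. Every bin closed by MM_k either holds exactly one large
  item, the largest remaining one, or only small items; in the latter case it holds k items or at
  least two items of total size more than 2/3, unless it is the last bin. Weighting every item of a
  bin of small items by a + b * size, with a and b chosen such that each such bin weighs at least 1,
  MM_k(I) is at most the number of large items plus the total weight plus 1.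

  This weight is charged to an optimal packing. An optimal bin without a large item carries weight
  at most k a + b. In the optimal bin of a large item, the items that MM_k packed in bins of small
  items are paid for by the small items that MM_k packed next to large items: if the two largest
  remaining items are both large, the bin of the first one is closed only when the smallest
  remaining item no longer fits, so it holds more items than its optimal bin shares with the items
  still remaining. The result is MM_k(I) <= (5/2 - 3/k) OPT_k(I) + k, and 5/2 - 3/k <= lambda_k - 1/k.
*)

theory Submission
  imports Defs "HOL-Library.Multiset"
begin

(* Items are indices with sizes v, so that items of equal size stay distinguishable. *)
function mm_bins :: "('a \<Rightarrow> real) \<Rightarrow> nat \<Rightarrow> real \<Rightarrow> 'a list \<Rightarrow> 'a list \<Rightarrow> 'a list list" where
  "mm_bins v k S cur [] = [cur]"
| "mm_bins v k S cur (x # xs) =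
    (if cur \<noteq> [] \<and> length cur \<ge> k then cur # mm_bins v k 0 [] (x # xs)
     else if S + v x \<le> 1 then mm_bins v k (S + v x) (x # cur) xs
     else if S + v (last (x # xs)) \<le> 1
       then mm_bins v k (S + v (last (x # xs))) (last (x # xs) # cur) (butlast (x # xs))
     else if cur = [] then [x # xs]
     else cur # mm_bins v k 0 [] (x # xs))"
  by pat_completeness auto
termination
  by (relation "measure (\<lambda>(v, k, S, cur, xs). 2 * length xs + (if cur = [] then 0 else 1))") auto

declare mm_bins.simps(2)[simp del]

lemma mm_bins_close:
  "cur \<noteq> [] \<Longrightarrow> length cur \<ge> k \<Longrightarrow> mm_bins v k S cur (x # xs) = cur # mm_bins v k 0 [] (x # xs)"
  by (subst mm_bins.simps(2)) auto

lemma mm_bins_head: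
  "\<not> (cur \<noteq> [] \<and> length cur \<ge> k) \<Longrightarrow> S + v x \<le> 1 \<Longrightarrow>
   mm_bins v k S cur (x # xs) = mm_bins v k (S + v x) (x # cur) xs"
  by (subst mm_bins.simps(2)) auto

lemma mm_bins_tail:
  "\<not> (cur \<noteq> [] \<and> length cur \<ge> k) \<Longrightarrow> \<not> S + v x \<le> 1 \<Longrightarrow> S + v (last (x # xs)) \<le> 1 \<Longrightarrow>
   mm_bins v k S cur (x # xs) = mm_bins v k (S + v (last (x # xs))) (last (x # xs) # cur) (butlast (x # xs))"
  by (subst mm_bins.simps(2)) auto

lemma mm_bins_stop:
  "\<not> (cur \<noteq> [] \<and> length cur \<ge> k) \<Longrightarrow> \<not> S + v x \<le> 1 \<Longrightarrow> \<not> S + v (last (x # xs)) \<le> 1 \<Longrightarrow>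
   cur \<noteq> [] \<Longrightarrow> mm_bins v k S cur (x # xs) = cur # mm_bins v k 0 [] (x # xs)"
  by (subst mm_bins.simps(2)) auto

lemma mm_aux_map_eq_mm_bins:
  "mm_aux k S (map v cur) (map v xs) = map (map v) (mm_bins v k S cur xs)"
proof (induction v k S cur xs rule: mm_bins.induct)
  case (1 v k S cur)
  then show ?case by simp
next
  case (2 v k S cur x xs)
  have "last (v x # map v xs) = v (last (x # xs))"
    by (metis last_map list.simps(9) list.distinct(1))
  moreover have "butlast (v x # map v xs) = map v (butlast (x # xs))"
    by (metis map_butlast list.simps(9))
  ultimately show ?case
    unfolding list.map(2) mm_aux.simps(2)[of k S "map v cur" "v x" "map v xs"] mm_bins.simps(2)[of v k S cur x xs]
    using 2 by (auto simp del: mm_aux.simps mm_bins.simps)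
qed

lemma mset_concat_mm_bins: "mset (concat (mm_bins v k S cur xs)) = mset cur + mset xs"
proof (induction v k S cur xs rule: mm_bins.induct)
  case (2 v k S cur x xs)
  have "mset (x # xs) = mset (last (x # xs) # butlast (x # xs))"
    by (subst (1) append_butlast_last_id[symmetric, of "x # xs"]) simp_all
  then show ?case using 2
    by (cases "k \<le> length cur") (auto simp: mm_bins.simps(2)[of v k S cur x xs])
qed simp

lemma set_concat_mm_bins: "set (concat (mm_bins v k S cur xs)) = set cur \<union> set xs"
  by (metis mset_concat_mm_bins set_mset_mset set_mset_union)

abbreviation load :: "('a \<Rightarrow> real) \<Rightarrow> 'a list \<Rightarrow> real" where
  "load v xs \<equiv> sum_list (map v xs)"

lemma load_mset_cong: "mset xs = mset ys \<Longrightarrow> load v xs = load v ys"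
  by (metis mset_map sum_mset_sum_list)

definition bin_full :: "('a \<Rightarrow> real) \<Rightarrow> nat \<Rightarrow> 'a list \<Rightarrow> 'a list \<Rightarrow> bool" where
  "bin_full v k c M \<longleftrightarrow> k \<le> length c \<or> (1 < load v c + v (hd M) \<and> 1 < load v c + v (last M))"

definition next_bin :: "('a \<Rightarrow> real) \<Rightarrow> nat \<Rightarrow> real \<Rightarrow> 'a list \<Rightarrow> 'a list \<Rightarrow> 'a list \<Rightarrow> 'a list \<Rightarrow> bool" where
  "next_bin v k S cur xs c M \<longleftrightarrow>
     (M = [] \<and> mm_bins v k S cur xs = [c]) \<or>
     (M \<noteq> [] \<and> mm_bins v k S cur xs = c # mm_bins v k 0 [] M \<and> bin_full v k c M)"

lemma mm_bins_tail_phase: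
  assumes "cur \<noteq> []" "xs \<noteq> []" "1 < S + v (hd xs)" "\<forall>x\<in>set xs. 0 \<le> v x"
    "S = load v cur" "S \<le> 1"
  shows "\<exists>M Tl c. xs = M @ Tl \<and> M \<noteq> [] \<and> mset c = mset cur + mset Tl \<and> load v c \<le> 1
           \<and> next_bin v k S cur xs c M"
  using assms
proof (induction "length xs" arbitrary: S cur xs rule: less_induct)
  case less
  obtain x xs' where xs: "xs = x # xs'" using less.prems(2) by (cases xs) auto
  have no_head: "\<not> S + v x \<le> 1" using less.prems(3) xs by simp
  consider "k \<le> length cur" | "length cur < k" "S + v (last xs) \<le> 1"
    | "length cur < k" "\<not> S + v (last xs) \<le> 1" by linarith
  then show ?case
  proof cases
    case 1
    then have "next_bin v k S cur xs cur xs"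
      using less.prems xs mm_bins_close unfolding next_bin_def bin_full_def by auto
    then show ?thesis using less.prems by (intro exI[of _ xs] exI[of _ "[]"] exI[of _ cur]) simp
  next
    case 2
    obtain zs y where xs_eq: "xs = zs @ [y]" using less.prems(2) by (cases xs rule: rev_exhaust) auto
    have "zs \<noteq> []" using 2 no_head xs xs_eq by (cases zs) auto
    then have "hd zs = x" using xs xs_eq by (cases zs) auto
    have run: "mm_bins v k S cur xs = mm_bins v k (S + v y) (y # cur) zs"
    proof -
      have "last xs = y" "butlast xs = zs" using xs_eq by simp_all
      then show ?thesis using mm_bins_tail[of cur k S v x xs'] 2 no_head unfolding xs[symmetric] by simp
    qed
    have "0 \<le> v y" using less.prems(4) xs_eq by simp
    then have "\<exists>M Tl c. zs = M @ Tl \<and> M \<noteq> [] \<and> mset c = mset (y # cur) + mset Tl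
        \<and> load v c \<le> 1 \<and> next_bin v k (S + v y) (y # cur) zs c M"
      using xs_eq \<open>zs \<noteq> []\<close> \<open>hd zs = x\<close> less.prems no_head 2
      by (intro less.hyps) auto
    then obtain M Tl c where "zs = M @ Tl" "M \<noteq> []" "mset c = mset (y # cur) + mset Tl"
        "load v c \<le> 1" "next_bin v k (S + v y) (y # cur) zs c M"
      by blast
    then show ?thesis using run xs_eq unfolding next_bin_def
      by (intro exI[of _ M] exI[of _ "Tl @ [y]"] exI[of _ c]) auto
  qed (use less.prems no_head xs mm_bins_stop[of cur k S v x xs'] in
        \<open>intro exI[of _ xs] exI[of _ "[]"] exI[of _ cur], auto simp: next_bin_def bin_full_def\<close>)
qed

lemma mm_bins_head_phase:
  assumes "S = load v cur" "S \<le> 1" "\<forall>x\<in>set xs. 0 \<le> v x \<and> v x \<le> 1"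
  shows "\<exists>H M Tl c. xs = H @ M @ Tl \<and> mset c = mset cur + mset H + mset Tl \<and> load v c \<le> 1
     \<and> (k \<le> length cur + length H \<or> M @ Tl = [] \<or> 1 < S + load v H + v (hd (M @ Tl)))
     \<and> next_bin v k S cur xs c M"
  using assms
proof (induction xs arbitrary: S cur)
  case Nil
  then show ?case unfolding next_bin_def
    by (intro exI[of _ "[]"] exI[of _ "[]"] exI[of _ "[]"] exI[of _ cur]) simp
next
  case (Cons x xs)
  consider "cur \<noteq> []" "k \<le> length cur" | "\<not> (cur \<noteq> [] \<and> k \<le> length cur)" "S + v x \<le> 1"
    | "\<not> (cur \<noteq> [] \<and> k \<le> length cur)" "\<not> S + v x \<le> 1" by linarith
  then show ?case
  proof cases
    case 1
    then have "next_bin v k S cur (x # xs) cur (x # xs)"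
      using mm_bins_close unfolding next_bin_def bin_full_def by auto
    then show ?thesis using 1 Cons.prems
      by (intro exI[of _ "[]"] exI[of _ "x # xs"] exI[of _ "[]"] exI[of _ cur]) simp
  next
    case 2
    then have run: "mm_bins v k S cur (x # xs) = mm_bins v k (S + v x) (x # cur) xs"
      by (intro mm_bins_head)
    have "\<exists>H M Tl c. xs = H @ M @ Tl \<and> mset c = mset (x # cur) + mset H + mset Tl \<and> load v c \<le> 1
       \<and> (k \<le> length (x # cur) + length H \<or> M @ Tl = [] \<or> 1 < (S + v x) + load v H + v (hd (M @ Tl)))
       \<and> next_bin v k (S + v x) (x # cur) xs c M"
      using Cons.prems 2 by (intro Cons.IH) auto
    then obtain H M Tl c where "xs = H @ M @ Tl" "mset c = mset (x # cur) + mset H + mset Tl"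
      "load v c \<le> 1" and stop: "k \<le> length (x # cur) + length H \<or> M @ Tl = [] \<or> 1 < (S + v x) + load v H + v (hd (M @ Tl))"
      and "next_bin v k (S + v x) (x # cur) xs c M"
      by blast
    moreover have "k \<le> length cur + length (x # H) \<or> M @ Tl = [] \<or> 1 < S + load v (x # H) + v (hd (M @ Tl))"
      using stop by (simp add: add.assoc)
    moreover have "mset c = mset cur + mset (x # H) + mset Tl"
      using \<open>mset c = mset (x # cur) + mset H + mset Tl\<close> by simp
    ultimately show ?thesis using run unfolding next_bin_def
      by (intro exI[of _ "x # H"] exI[of _ M] exI[of _ Tl] exI[of _ c]) simp
  next
    case 3
    then have "cur \<noteq> []" using Cons.prems by auto
    then have "\<exists>M Tl c. x # xs = M @ Tl \<and> M \<noteq> [] \<and> mset c = mset cur + mset Tl \<and> load v c \<le> 1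
        \<and> next_bin v k S cur (x # xs) c M"
      using 3 Cons.prems by (intro mm_bins_tail_phase) auto
    then obtain M Tl c where "x # xs = M @ Tl" "M \<noteq> []" "mset c = mset cur + mset Tl"
      "load v c \<le> 1" "next_bin v k S cur (x # xs) c M"
      by blast
    moreover from this have "hd M = x" by (cases M) auto
    ultimately show ?thesis using 3
      by (intro exI[of _ "[]"] exI[of _ M] exI[of _ Tl] exI[of _ c]) (simp add: hd_append)
  qed
qed

definition sorted_items :: "('a \<Rightarrow> real) \<Rightarrow> 'a list \<Rightarrow> bool" where
  "sorted_items v xs \<longleftrightarrow>
     sorted_wrt (\<lambda>i j. v j \<le> v i) xs \<and> distinct xs \<and> (\<forall>i\<in>set xs. 0 < v i \<and> v i \<le> 1)"

lemma sorted_items_middle: "sorted_items v (H @ M @ Tl) \<Longrightarrow> sorted_items v M"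
  unfolding sorted_items_def by (auto simp: sorted_wrt_append)

lemma mm_bins_first_bin:
  assumes "sorted_items v xs" "xs \<noteq> []" "1 \<le> k"
  obtains H M Tl c where "xs = H @ M @ Tl" "H \<noteq> []" "set c = set H \<union> set Tl" "distinct c"
    "length c = length H + length Tl" "load v c = load v H + load v Tl" "load v c \<le> 1"
    "k \<le> length H \<or> M @ Tl = [] \<or> 1 < load v H + v (hd (M @ Tl))"
    "next_bin v k 0 [] xs c M"
proof -
  have "\<forall>x\<in>set xs. 0 \<le> v x \<and> v x \<le> 1"
    using assms(1) unfolding sorted_items_def by (auto simp: less_imp_le)
  then have "\<exists>H M Tl c. xs = H @ M @ Tl \<and> mset c = mset (H @ Tl) \<and> load v c \<le> 1
     \<and> (k \<le> length H \<or> M @ Tl = [] \<or> 1 < load v H + v (hd (M @ Tl)))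
     \<and> next_bin v k 0 [] xs c M"
    using mm_bins_head_phase[of 0 v "[]" xs k] by simp
  then obtain H M Tl c where split: "xs = H @ M @ Tl" and c: "mset c = mset (H @ Tl)" "load v c \<le> 1"
    and stop: "k \<le> length H \<or> M @ Tl = [] \<or> 1 < load v H + v (hd (M @ Tl))"
    and run: "next_bin v k 0 [] xs c M"
    by blast
  have "H \<noteq> []"
  proof
    assume "H = []"
    then have "1 < v (hd xs)" using stop split assms(2,3) by auto
    then show False using assms(1,2) unfolding sorted_items_def by (cases xs) auto
  qed
  moreover have "distinct c"
    using assms(1) split c(1) mset_eq_imp_distinct_iff[of c "H @ Tl"] unfolding sorted_items_def by auto
  moreover have "set c = set H \<union> set Tl" by (metis c(1) set_mset_mset set_append)
  moreover have "length c = length H + length Tl" by (metis c(1) size_mset length_append)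
  moreover have "load v c = load v H + load v Tl" using load_mset_cong[OF c(1)] by simp
  ultimately show thesis using that split c stop run by blast
qed

lemma antisorted_le_hd:
  "sorted_wrt (\<lambda>i j. v j \<le> v i) xs \<Longrightarrow> i \<in> set xs \<Longrightarrow> (v i :: real) \<le> v (hd xs)"
  by (cases xs) auto

lemma antisorted_last_le:
  "sorted_wrt (\<lambda>i j. v j \<le> v i) xs \<Longrightarrow> i \<in> set xs \<Longrightarrow> v (last xs) \<le> (v i :: real)"
proof (induction xs)
  case (Cons x xs)
  then show ?case by (cases "xs = []") (auto dest: last_in_set)
qed simp

lemma small_bin_filled:
  assumes "sorted_items v xs" "xs = H @ M @ Tl" "H \<noteq> []" "M \<noteq> []" "2 \<le> k"
    "k \<le> length H \<or> M @ Tl = [] \<or> 1 < load v H + v (hd (M @ Tl))"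
    "bin_full v k c M" "load v c = load v H + load v Tl" "length c = length H + length Tl"
    "v (hd xs) \<le> 1/2"
  shows "k \<le> length c \<or> (2 \<le> length c \<and> 2/3 < load v c)"
proof (cases "k \<le> length c")
  case False
  have srt: "sorted_wrt (\<lambda>i j. v j \<le> v i) xs" and pos: "\<forall>i\<in>set xs. 0 < v i"
    using assms(1) unfolding sorted_items_def by auto
  have small: "v i \<le> 1/2" if "i \<in> set xs" for i
    using antisorted_le_hd[OF srt that] assms(10) by simp
  have no_fit: "1 < load v c + v (hd M)" using False assms(7) unfolding bin_full_def by simp
  obtain h1 H1 where H: "H = h1 # H1" using assms(3) by (cases H) auto
  have "H1 \<noteq> []"
  proof
    assume "H1 = []"
    moreover have "v h1 \<le> 1/2" "v (hd (M @ Tl)) \<le> 1/2"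
      using small assms(2,4) H by auto
    ultimately show False using assms(4,5,6) H by auto
  qed
  then obtain h2 H2 where H1: "H1 = h2 # H2" by (cases H1) auto
  have "v (hd M) \<le> v h1" "v (hd M) \<le> v h2"
    using srt assms(2,4) H H1 by (auto simp: sorted_wrt_append)
  moreover have "0 \<le> load v H2" "0 \<le> load v Tl"
    using pos assms(2) H H1 by (auto intro!: sum_list_nonneg simp: less_imp_le)
  ultimately have "2 * v (hd M) \<le> load v c" using assms(8) H H1 by simp
  then show ?thesis using no_fit assms(9) H H1 by simp
qed simp

definition feasible_bin :: "('a \<Rightarrow> real) \<Rightarrow> nat \<Rightarrow> 'a set \<Rightarrow> bool" where
  "feasible_bin v k Q \<longleftrightarrow> finite Q \<and> card Q \<le> k \<and> sum v Q \<le> 1 \<and> (\<forall>i\<in>Q. 0 \<le> v i)"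

lemma large_bin_items:
  assumes "sorted_items v xs" "xs = H @ M @ Tl" "H \<noteq> []" "set c = set H \<union> set Tl" "distinct c"
    "load v c \<le> 1" "1/2 < v (hd xs)"
  shows "hd xs \<in> set c" and "\<forall>i\<in>set c. i \<noteq> hd xs \<longrightarrow> v i < 1/2"
proof -
  have pos: "\<forall>i\<in>set xs. 0 < v i" using assms(1) unfolding sorted_items_def by auto
  show hd_in: "hd xs \<in> set c" using assms(2,3,4) by simp
  have load_c: "load v c = sum v (set c)" using assms(5) by (simp add: sum_list_distinct_conv_sum_set)
  show "\<forall>i\<in>set c. i \<noteq> hd xs \<longrightarrow> v i < 1/2"
  proof (intro ballI impI)
    fix i assume i: "i \<in> set c" "i \<noteq> hd xs"
    have "sum v {hd xs, i} \<le> sum v (set c)"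
      using i hd_in pos assms(2,4) by (intro sum_mono2) (auto simp: less_imp_le)
    then show "v i < 1/2" using i load_c assms(6,7) by simp
  qed
qed

(*
  The bin c receives a single item from the head. The items of Q in M are at least as large as
  last M, which does not fit into c, while the items of Tl are at most as large.
*)
lemma large_bin_opt_bound:
  assumes "sorted_items v xs" "xs = H @ M @ Tl" "H \<noteq> []" "length c = length H + length Tl"
    "load v c = load v H + load v Tl" "load v c \<le> 1" "1/2 < v (hd xs)" "1/2 < v (xs ! 1)"
    "M \<noteq> []" "bin_full v k c M" "feasible_bin v k Q" "hd xs \<in> Q"
  shows "card (Q \<inter> set M) + 1 \<le> length c"
proof -
  have srt: "sorted_wrt (\<lambda>i j. v j \<le> v i) xs" and pos: "\<forall>i\<in>set xs. 0 < v i"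
    and dxs: "distinct xs"
    using assms(1) unfolding sorted_items_def by auto
  have Q: "finite Q" "card Q \<le> k" "sum v Q \<le> 1" "\<forall>i\<in>Q. 0 \<le> v i"
    using assms(11) unfolding feasible_bin_def by auto
  obtain x1 H' where H: "H = x1 # H'" using assms(3) by (cases H) auto
  have load_Tl: "0 \<le> load v Tl" using pos assms(2) by (auto intro!: sum_list_nonneg simp: less_imp_le)
  have "H' = []"
  proof (rule ccontr)
    assume "H' \<noteq> []"
    then obtain x2 H'' where H': "H' = x2 # H''" by (cases H') auto
    have "0 \<le> load v H''" using pos assms(2) H H' by (auto intro!: sum_list_nonneg simp: less_imp_le)
    then show False using assms(2,5,6,7,8) H H' load_Tl by simp
  qed
  have x1: "hd xs = x1" "x1 \<notin> set M" using dxs assms(2) H by auto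
  have "card (Q \<inter> set M) \<le> card (Q - {x1})" using Q(1) x1 by (intro card_mono) auto
  also have "\<dots> = card Q - 1" using Q(1) assms(12) x1 by simp
  finally have card_QM: "card (Q \<inter> set M) + 1 \<le> k" using Q assms(12) by (cases "card Q") auto
  show ?thesis
  proof (cases "k \<le> length c")
    case False
    define t where "t = v (last M)"
    have no_fit: "1 < load v c + t" using False assms(10) unfolding t_def bin_full_def by simp
    have "t > 0" using pos assms(2,9) unfolding t_def by simp
    have sorted_MTl: "sorted_wrt (\<lambda>i j. v j \<le> v i) (M @ Tl)" using srt assms(2) by (simp add: sorted_wrt_append)
    have "v z \<le> t" if "z \<in> set Tl" for z
      using sorted_MTl assms(9) that unfolding t_def by (simp add: sorted_wrt_append)
    then have "load v Tl \<le> real (length Tl) * t" using sum_list_mono[of Tl v "\<lambda>_. t"] by (simp add: sum_list_triv)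
    moreover have "real (card (Q \<inter> set M)) * t \<le> sum v (Q \<inter> set M)"
      using antisorted_last_le[of v M] sorted_MTl unfolding t_def
      by (intro sum_bounded_below) (auto simp: sorted_wrt_append)
    moreover have "v x1 + sum v (Q \<inter> set M) \<le> sum v Q"
    proof -
      have "v x1 + sum v (Q \<inter> set M) = sum v (insert x1 (Q \<inter> set M))" using x1 Q(1) by simp
      also have "\<dots> \<le> sum v Q" using Q x1 assms(12) by (intro sum_mono2) auto
      finally show ?thesis .
    qed
    ultimately have "real (card (Q \<inter> set M)) * t < (real (length Tl) + 1) * t"
      using Q(3) no_fit assms(5) H \<open>H' = []\<close> by (simp add: algebra_simps)
    then have "real (card (Q \<inter> set M)) < real (length Tl) + 1" using \<open>t > 0\<close> by simp
    then show ?thesis using assms(4) H \<open>H' = []\<close> by simp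
  qed (use card_QM in simp)
qed

primrec small_bin_items :: "('a \<Rightarrow> real) \<Rightarrow> 'a list list \<Rightarrow> 'a set" where
  "small_bin_items v [] = {}"
| "small_bin_items v (c # bs) =
     (if \<forall>i\<in>set c. v i \<le> 1/2 then set c else {}) \<union> small_bin_items v bs"

primrec large_bin_rest :: "('a \<Rightarrow> real) \<Rightarrow> 'a list list \<Rightarrow> 'a set" where
  "large_bin_rest v [] = {}"
| "large_bin_rest v (c # bs) =
     (if \<forall>i\<in>set c. v i \<le> 1/2 then {} else set c - {i. 1/2 < v i}) \<union> large_bin_rest v bs"

lemma small_bin_items_le: "i \<in> small_bin_items v bs \<Longrightarrow> v i \<le> 1/2"
  by (induction bs) (auto split: if_splits)

lemma large_bin_rest_le: "i \<in> large_bin_rest v bs \<Longrightarrow> v i \<le> 1/2"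
  by (induction bs) (auto split: if_splits)

lemma small_bin_items_subset: "small_bin_items v bs \<subseteq> set (concat bs)"
  by (induction bs) auto

lemma large_bin_rest_subset: "large_bin_rest v bs \<subseteq> set (concat bs)"
  by (induction bs) auto

lemma small_bin_items_large_bin_rest_disjoint:
  "distinct (concat bs) \<Longrightarrow> small_bin_items v bs \<inter> large_bin_rest v bs = {}"
proof (induction bs)
  case (Cons c bs)
  then show ?case
    using small_bin_items_subset[of v bs] large_bin_rest_subset[of v bs] by auto
qed simp

abbreviation large_items :: "('a \<Rightarrow> real) \<Rightarrow> 'a set \<Rightarrow> 'a set" where
  "large_items v A \<equiv> {i\<in>A. 1/2 < v i}"

lemma filled_bin_weight_ge_one:
  fixes a b :: real
  assumes "0 \<le> a" "0 \<le> b" "1 \<le> real k * a" "1 \<le> 2 * a + 2 * b / 3"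
    and "distinct c" "\<forall>i\<in>set c. 0 \<le> v i" "k \<le> length c \<or> (2 \<le> length c \<and> 2/3 < load v c)"
  shows "1 \<le> (\<Sum>i\<in>set c. a + b * v i)"
proof -
  have "(\<Sum>i\<in>set c. a + b * v i) = a * real (length c) + b * load v c"
    using assms(5) by (simp add: sum.distrib sum_distrib_left sum_list_distinct_conv_sum_set distinct_card)
  moreover have "0 \<le> load v c" by (rule sum_list_nonneg) (use assms(6) in auto)
  moreover have "1 \<le> a * real (length c) + b * load v c"
  proof (cases "k \<le> length c")
    case True
    then have "real k * a \<le> a * real (length c)" using assms(1) by (simp add: mult.commute mult_left_mono)
    then show ?thesis using assms(2,3) \<open>0 \<le> load v c\<close> by (smt (verit) mult_nonneg_nonneg)
  next
    case False
    then have "2 * a \<le> a * real (length c)" using assms(1,7) by (simp add: mult.commute mult_left_mono)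
    moreover have "b * (2/3) \<le> b * load v c" using False assms(2,7) by (intro mult_left_mono) auto
    ultimately show ?thesis using assms(4) by linarith
  qed
  ultimately show ?thesis by simp
qed

lemma mm_bins_length_le:
  fixes a b :: real
  assumes "sorted_items v xs" "2 \<le> k" "0 \<le> a" "0 \<le> b" "1 \<le> real k * a" "1 \<le> 2 * a + 2 * b / 3"
  shows "real (length (mm_bins v k 0 [] xs))
    \<le> real (card (large_items v (set xs))) + (\<Sum>i\<in>small_bin_items v (mm_bins v k 0 [] xs). a + b * v i) + 1"
  using assms(1)
proof (induction "length xs" arbitrary: xs rule: less_induct)
  case less
  show ?case
  proof (cases "xs = []")
    case False
    obtain H M Tl c where split: "xs = H @ M @ Tl" "H \<noteq> []" "set c = set H \<union> set Tl" "distinct c"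
      "length c = length H + length Tl" "load v c = load v H + load v Tl" "load v c \<le> 1"
      "k \<le> length H \<or> M @ Tl = [] \<or> 1 < load v H + v (hd (M @ Tl))"
      and run: "next_bin v k 0 [] xs c M"
      by (rule mm_bins_first_bin[OF less.prems False, where k = k]) (use assms(2) in linarith)
    have pos: "\<forall>i\<in>set xs. 0 < v i" and dxs: "distinct xs"
      using less.prems unfolding sorted_items_def by auto
    let ?W = "\<lambda>A. \<Sum>i\<in>A. a + b * v i"
    have small_xs: "small_bin_items v (mm_bins v k 0 [] xs) \<subseteq> set xs"
      using small_bin_items_subset[of v "mm_bins v k 0 [] xs"] unfolding set_concat_mm_bins by simp
    have W_nonneg: "0 \<le> ?W (small_bin_items v (mm_bins v k 0 [] xs))"
      using small_xs pos assms(3,4) by (intro sum_nonneg) (auto simp: less_imp_le)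
    consider "M = []" "mm_bins v k 0 [] xs = [c]"
      | "M \<noteq> []" "mm_bins v k 0 [] xs = c # mm_bins v k 0 [] M" "bin_full v k c M"
      using run unfolding next_bin_def by blast
    then show ?thesis
    proof cases
      case 2
      have "length M < length xs" using split(1,2) by simp
      moreover have sorted_M: "sorted_items v M" using sorted_items_middle less.prems split(1) by blast
      ultimately have IH: "real (length (mm_bins v k 0 [] M)) \<le> real (card (large_items v (set M)))
           + ?W (small_bin_items v (mm_bins v k 0 [] M)) + 1"
        using less.hyps by blast
      have small_M: "small_bin_items v (mm_bins v k 0 [] M) \<subseteq> set M"
        using small_bin_items_subset[of v "mm_bins v k 0 [] M"] unfolding set_concat_mm_bins by simp
      have large_M: "large_items v (set M) \<subseteq> large_items v (set xs)" using split(1) by auto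
      show ?thesis
      proof (cases "v (hd xs) \<le> 1/2")
        case True
        have small: "v i \<le> 1/2" if "i \<in> set xs" for i
          using antisorted_le_hd[OF _ that] less.prems True unfolding sorted_items_def by fastforce
        then have "\<forall>i\<in>set c. v i \<le> 1/2" using split(1,3) by auto
        then have small_eq: "small_bin_items v (mm_bins v k 0 [] xs) = set c \<union> small_bin_items v (mm_bins v k 0 [] M)"
          using 2 by simp
        have "set c \<inter> set M = {}" using dxs split(1,3) by auto
        then have W_eq: "?W (small_bin_items v (mm_bins v k 0 [] xs)) = ?W (set c) + ?W (small_bin_items v (mm_bins v k 0 [] M))"
          unfolding small_eq using small_M by (intro sum.union_disjoint) (auto intro: finite_subset)
        have "1 \<le> ?W (set c)"
        proof (rule filled_bin_weight_ge_one[OF assms(3-6) split(4)])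
          show "\<forall>i\<in>set c. 0 \<le> v i" using pos split(1,3) by (auto simp: less_imp_le)
          show "k \<le> length c \<or> (2 \<le> length c \<and> 2/3 < load v c)"
            using small_bin_filled[OF less.prems split(1,2) 2(1) assms(2) split(8) 2(3) split(6,5) True] .
        qed
        then show ?thesis using IH 2(2) W_eq card_mono[OF _ large_M] by simp
      next
        case False
        have "hd xs \<in> set c" using large_bin_items(1)[OF less.prems split(1-4,7)] False by simp
        then have large_c: "\<not> (\<forall>i\<in>set c. v i \<le> 1/2)" using False by auto
        have small_eq: "small_bin_items v (mm_bins v k 0 [] xs) = small_bin_items v (mm_bins v k 0 [] M)"
          unfolding 2(2) small_bin_items.simps if_not_P[OF large_c] by simp
        have "hd xs \<notin> set M" using \<open>hd xs \<in> set c\<close> dxs split(1,3) by auto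
        have "insert (hd xs) (large_items v (set M)) \<subseteq> large_items v (set xs)"
          using large_M False \<open>xs \<noteq> []\<close> by auto
        then have "card (insert (hd xs) (large_items v (set M))) \<le> card (large_items v (set xs))"
          by (intro card_mono) simp_all
        then have "card (large_items v (set M)) + 1 \<le> card (large_items v (set xs))"
          using \<open>hd xs \<notin> set M\<close> by simp
        then show ?thesis using IH 2(2) small_eq by simp
      qed
    qed (use W_nonneg in simp)
  qed simp
qed

lemma large_items_eq_insert:
  assumes "xs = H @ M @ Tl" "set c = set H \<union> set Tl" "hd xs \<in> set c" "1/2 < v (hd xs)"
    "\<forall>i\<in>set c. i \<noteq> hd xs \<longrightarrow> v i < 1/2"
  shows "large_items v (set xs) = insert (hd xs) (large_items v (set M))"
proof (intro equalityI subsetI)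
  fix i assume i: "i \<in> large_items v (set xs)"
  show "i \<in> insert (hd xs) (large_items v (set M))"
  proof (cases "i \<in> set M")
    case False
    then have "i \<in> set c" using i assms(1,2) by auto
    then show ?thesis using assms(5) i by force
  qed (use i in simp)
qed (use assms in auto)

lemma large_items_singleton:
  assumes "sorted_wrt (\<lambda>i j. v j \<le> v i) xs" "xs \<noteq> []" "1/2 < v (hd xs)" "\<not> 1/2 < v (xs ! 1)"
  shows "large_items v (set xs) = {hd xs}"
proof (cases xs)
  case (Cons y ys)
  have "v i \<le> 1/2" if "i \<in> set ys" for i
    using antisorted_le_hd[of v ys i] assms(1,4) that Cons by (cases ys) auto
  then show ?thesis using Cons assms(3) by (auto simp: not_less[symmetric])
qed (use assms(2) in simp)

(* The large items form a prefix of xs; all but the last one are covered by large_bin_opt_bound. *)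
lemma large_items_opt_bins_small_le:
  assumes "sorted_items v xs" "2 \<le> k" "\<forall>j\<in>set xs. j \<in> Q j \<and> feasible_bin v k (Q j)"
  shows "(\<Sum>j\<in>large_items v (set xs). card (Q j \<inter> small_bin_items v (mm_bins v k 0 [] xs)))
           \<le> card (large_bin_rest v (mm_bins v k 0 [] xs)) + (k - 1)"
  using assms(1,3)
proof (induction "length xs" arbitrary: xs rule: less_induct)
  case less
  have srt: "sorted_wrt (\<lambda>i j. v j \<le> v i) xs" and dxs: "distinct xs"
    using less.prems(1) unfolding sorted_items_def by auto
  show ?case
  proof (cases "xs \<noteq> [] \<and> 1/2 < v (hd xs)")
    case True
    then have "xs \<noteq> []" and x1_large: "1/2 < v (hd xs)" by auto
    define x1 where "x1 = hd xs"
    obtain H M Tl c where split: "xs = H @ M @ Tl" "H \<noteq> []" "set c = set H \<union> set Tl" "distinct c"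
      "length c = length H + length Tl" "load v c = load v H + load v Tl" "load v c \<le> 1"
      and run: "next_bin v k 0 [] xs c M"
      by (rule mm_bins_first_bin[OF less.prems(1) \<open>xs \<noteq> []\<close>, where k = k]) (use assms(2) in linarith)
    have x1_c: "x1 \<in> set c" and c_small: "\<forall>i\<in>set c. i \<noteq> x1 \<longrightarrow> v i < 1/2"
      using large_bin_items[OF less.prems(1) split(1-4,7) x1_large] unfolding x1_def by auto
    have large_c: "\<not> (\<forall>i\<in>set c. v i \<le> 1/2)"
      using x1_c x1_large unfolding x1_def by (meson linorder_not_less)
    have Q1: "x1 \<in> Q x1" "feasible_bin v k (Q x1)"
      using less.prems(2) \<open>xs \<noteq> []\<close> unfolding x1_def by auto
    have "x1 \<notin> small_bin_items v (mm_bins v k 0 [] xs)"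
      using small_bin_items_le x1_large x1_def by fastforce
    then have "card (Q x1 \<inter> small_bin_items v (mm_bins v k 0 [] xs)) \<le> card (Q x1 - {x1})"
      using Q1 unfolding feasible_bin_def by (intro card_mono) auto
    also have "\<dots> \<le> k - 1" using Q1 unfolding feasible_bin_def by (simp add: diff_le_mono)
    finally have Q1_bound: "card (Q x1 \<inter> small_bin_items v (mm_bins v k 0 [] xs)) \<le> k - 1" .
    show ?thesis
    proof (cases "1/2 < v (xs ! 1) \<and> M \<noteq> []")
      case True
      then have "M \<noteq> []" and x2_large: "1/2 < v (xs ! 1)" by auto
      then have run_M: "mm_bins v k 0 [] xs = c # mm_bins v k 0 [] M" and full: "bin_full v k c M"
        using run unfolding next_bin_def by auto
      have "length M < length xs" using split(1,2) by simp
      moreover have sorted_M: "sorted_items v M" using sorted_items_middle less.prems(1) split(1) by blast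
      moreover have "\<forall>j\<in>set M. j \<in> Q j \<and> feasible_bin v k (Q j)" using less.prems(2) split(1) by auto
      ultimately have IH: "(\<Sum>j\<in>large_items v (set M). card (Q j \<inter> small_bin_items v (mm_bins v k 0 [] M)))
           \<le> card (large_bin_rest v (mm_bins v k 0 [] M)) + (k - 1)"
        using less.hyps by blast
      have M_items: "small_bin_items v (mm_bins v k 0 [] M) \<subseteq> set M" "large_bin_rest v (mm_bins v k 0 [] M) \<subseteq> set M"
        using small_bin_items_subset[of v "mm_bins v k 0 [] M"] large_bin_rest_subset[of v "mm_bins v k 0 [] M"]
        unfolding set_concat_mm_bins by simp_all
      have disj: "set c \<inter> set M = {}" using dxs split(1,3) by auto
      have small_eq: "small_bin_items v (mm_bins v k 0 [] xs) = small_bin_items v (mm_bins v k 0 [] M)"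
        unfolding run_M small_bin_items.simps if_not_P[OF large_c] by simp
      have "set c - {i. 1/2 < v i} = set c - {x1}" using c_small x1_c x1_large x1_def by force
      then have rest_eq: "large_bin_rest v (mm_bins v k 0 [] xs) = (set c - {x1}) \<union> large_bin_rest v (mm_bins v k 0 [] M)"
        unfolding run_M large_bin_rest.simps if_not_P[OF large_c] by simp
      have "card (large_bin_rest v (mm_bins v k 0 [] xs)) = card (set c - {x1}) + card (large_bin_rest v (mm_bins v k 0 [] M))"
        unfolding rest_eq using disj M_items(2) by (intro card_Un_disjoint) (auto intro: finite_subset)
      also have "card (set c - {x1}) = length c - 1" using x1_c split(4) by (simp add: distinct_card)
      finally have card_rest: "card (large_bin_rest v (mm_bins v k 0 [] xs))
          = length c - 1 + card (large_bin_rest v (mm_bins v k 0 [] M))" .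
      have large_eq: "large_items v (set xs) = insert x1 (large_items v (set M))"
        using large_items_eq_insert[OF split(1,3) x1_c[unfolded x1_def] x1_large c_small[unfolded x1_def]]
        unfolding x1_def by simp
      have "x1 \<notin> set M" using x1_c disj by auto
      have "card (Q x1 \<inter> small_bin_items v (mm_bins v k 0 [] M)) \<le> card (Q x1 \<inter> set M)"
        using Q1 M_items unfolding feasible_bin_def by (intro card_mono) auto
      also have "\<dots> + 1 \<le> length c"
        using large_bin_opt_bound[OF less.prems(1) split(1,2,5,6,7) x1_large x2_large \<open>M \<noteq> []\<close> full Q1(2)] Q1(1)
        unfolding x1_def by simp
      finally have "card (Q x1 \<inter> small_bin_items v (mm_bins v k 0 [] M)) + 1 \<le> length c" by simp
      moreover have "(\<Sum>j\<in>large_items v (set xs). card (Q j \<inter> small_bin_items v (mm_bins v k 0 [] xs)))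
          = card (Q x1 \<inter> small_bin_items v (mm_bins v k 0 [] M))
            + (\<Sum>j\<in>large_items v (set M). card (Q j \<inter> small_bin_items v (mm_bins v k 0 [] M)))"
        unfolding large_eq small_eq using \<open>x1 \<notin> set M\<close> by simp
      ultimately show ?thesis using IH card_rest by linarith
    next
      case False
      show ?thesis
      proof (cases "M = []")
        case True
        then have "small_bin_items v (mm_bins v k 0 [] xs) = {}"
          using run large_c unfolding next_bin_def by auto
        then show ?thesis by simp
      next
        case False
        then have x2_small: "\<not> 1/2 < v (xs ! 1)" using \<open>\<not> (1/2 < v (xs ! 1) \<and> M \<noteq> [])\<close> by simp
        have "large_items v (set xs) = {x1}"
          using large_items_singleton[OF srt \<open>xs \<noteq> []\<close> x1_large x2_small] unfolding x1_def .
        then show ?thesis using Q1_bound by (simp only:) simp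
      qed
    qed
  next
    case False
    have "large_items v (set xs) = {}"
      using False antisorted_le_hd[OF srt] by (cases "xs = []") (fastforce simp: not_less)+
    then show ?thesis by (simp only:) simp
  qed
qed

locale opt_packing =
  fixes v :: "'a \<Rightarrow> real" and k :: nat and N :: "'a set" and f :: "'a \<Rightarrow> nat"
  assumes finite_items: "finite N"
    and size_pos: "\<And>i. i \<in> N \<Longrightarrow> 0 < v i"
    and feasible: "\<And>p. feasible_bin v k {i\<in>N. f i = p}"
begin

definition opt_bin :: "nat \<Rightarrow> 'a set" where
  "opt_bin p = {i\<in>N. f i = p}"

lemma finite_opt_bin: "finite (opt_bin p)"
  using finite_items unfolding opt_bin_def by simp

lemma card_opt_bin: "card (opt_bin p) \<le> k"
  and load_opt_bin: "sum v (opt_bin p) \<le> 1"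
  using feasible[of p] unfolding feasible_bin_def opt_bin_def by auto

lemma inj_on_large_items: "inj_on f (large_items v N)"
proof (rule inj_onI)
  fix i j assume ij: "i \<in> large_items v N" "j \<in> large_items v N" "f i = f j"
  show "i = j"
  proof (rule ccontr)
    assume "i \<noteq> j"
    then have "v i + v j = sum v {i, j}" by simp
    also have "\<dots> \<le> sum v (opt_bin (f i))"
      using ij size_pos finite_opt_bin unfolding opt_bin_def by (intro sum_mono2) (auto simp: less_imp_le)
    also have "\<dots> \<le> 1" by (rule load_opt_bin)
    finally show False using ij by simp
  qed
qed

lemma card_bins_without_large:
  "real (card (f ` N - f ` large_items v N)) = real (card (f ` N)) - real (card (large_items v N))"
proof -
  have "card (large_items v N) \<le> card (f ` N)"
    using finite_items card_image[OF inj_on_large_items] card_mono[of "f ` N" "f ` large_items v N"] by auto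
  then show ?thesis
    using finite_items card_image[OF inj_on_large_items] by (subst card_Diff_subset) auto
qed

lemma sum_by_opt_bins:
  assumes "A \<subseteq> N"
  shows "sum g A = (\<Sum>p\<in>f ` N - f ` large_items v N. sum g (A \<inter> opt_bin p))
                 + (\<Sum>j\<in>large_items v N. sum g (A \<inter> opt_bin (f j)))"
proof -
  have "sum g A = (\<Sum>p\<in>f ` N. sum g (A \<inter> opt_bin p))"
  proof -
    have "sum g A = (\<Sum>p\<in>f ` N. sum g {i\<in>A. f i = p})"
      using assms finite_items by (intro sum.group[symmetric]) (auto intro: finite_subset)
    also have "\<dots> = (\<Sum>p\<in>f ` N. sum g (A \<inter> opt_bin p))"
      using assms unfolding opt_bin_def by (intro sum.cong) auto
    finally show ?thesis .
  qed
  also have "\<dots> = (\<Sum>p\<in>f ` N - f ` large_items v N. sum g (A \<inter> opt_bin p))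
      + (\<Sum>p\<in>f ` large_items v N. sum g (A \<inter> opt_bin p))"
    using finite_items by (intro sum.subset_diff) auto
  also have "(\<Sum>p\<in>f ` large_items v N. sum g (A \<inter> opt_bin p)) = (\<Sum>j\<in>large_items v N. sum g (A \<inter> opt_bin (f j)))"
    by (rule sum.reindex[OF inj_on_large_items, unfolded comp_def])
  finally show ?thesis .
qed

lemma weight_opt_bin_le:
  fixes a b :: real
  assumes "A \<subseteq> opt_bin p" "0 \<le> a" "0 \<le> b"
  shows "(\<Sum>i\<in>A. a + b * v i) \<le> real k * a + b"
proof -
  have "(\<Sum>i\<in>A. a + b * v i) \<le> (\<Sum>i\<in>opt_bin p. a + b * v i)"
    using assms size_pos finite_opt_bin unfolding opt_bin_def
    by (intro sum_mono2) (auto intro!: add_nonneg_nonneg mult_nonneg_nonneg simp: less_imp_le)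
  also have "\<dots> = a * real (card (opt_bin p)) + b * sum v (opt_bin p)"
    by (simp add: sum.distrib sum_distrib_left mult.commute)
  also have "\<dots> \<le> a * real k + b * 1"
    using card_opt_bin load_opt_bin assms(2,3) by (intro add_mono mult_left_mono) auto
  finally show ?thesis by (simp add: mult.commute)
qed

lemma small_items_in_large_opt_bin:
  assumes "j \<in> large_items v N" "A \<subseteq> N" "\<forall>i\<in>A. v i \<le> 1/2"
  shows "sum v (A \<inter> opt_bin (f j)) \<le> 1/2" and "card (A \<inter> opt_bin (f j)) \<le> k - 1"
proof -
  have j: "j \<in> opt_bin (f j)" "j \<notin> A" using assms unfolding opt_bin_def by auto
  have fin: "finite (A \<inter> opt_bin (f j))" using finite_opt_bin by simp
  have "v j + sum v (A \<inter> opt_bin (f j)) = sum v (insert j (A \<inter> opt_bin (f j)))"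
    using j fin by simp
  also have "\<dots> \<le> sum v (opt_bin (f j))"
    using j assms(2) size_pos finite_opt_bin unfolding opt_bin_def
    by (intro sum_mono2) (auto simp: less_imp_le)
  also have "\<dots> \<le> 1" by (rule load_opt_bin)
  finally show "sum v (A \<inter> opt_bin (f j)) \<le> 1/2" using assms(1) by simp
  have "card (A \<inter> opt_bin (f j)) \<le> card (opt_bin (f j) - {j})"
    using j finite_opt_bin by (intro card_mono) auto
  also have "\<dots> \<le> k - 1" using j card_opt_bin by (simp add: diff_le_mono)
  finally show "card (A \<inter> opt_bin (f j)) \<le> k - 1" .
qed

(*
  R stands for the items that MM_k packs in bins of small items and T for the small items that
  it packs next to a large item.
*)
lemma small_items_weight_le:
  fixes a b :: real
  assumes "R \<subseteq> N" "T \<subseteq> N" "R \<inter> T = {}" "\<forall>i\<in>R \<union> T. v i \<le> 1/2" "0 \<le> a" "0 \<le> b" "1 \<le> k"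
    and charge: "(\<Sum>j\<in>large_items v N. card (opt_bin (f j) \<inter> R)) \<le> card T + (k - 1)"
  shows "(\<Sum>i\<in>R. a + b * v i) \<le> (real k * a + b) * (real (card (f ` N)) - real (card (large_items v N)))
          + (a * (real k - 1) / 2 + b / 2) * real (card (large_items v N)) + a * (real k - 1) / 2"
proof -
  define L where "L = large_items v N"
  define P where "P = f ` N - f ` L"
  define U where "U i = a + b * v i" for i
  define r where "r j = real (card (R \<inter> opt_bin (f j)))" for j
  define t where "t p = real (card (T \<inter> opt_bin p))" for p
  have finite_RT: "finite R" "finite T" using assms(1,2) finite_items by (auto intro: finite_subset)
  have R_split: "sum U R = (\<Sum>p\<in>P. sum U (R \<inter> opt_bin p)) + (\<Sum>j\<in>L. sum U (R \<inter> opt_bin (f j)))"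
    unfolding P_def L_def by (rule sum_by_opt_bins[OF assms(1)])
  have T_split: "real (card T) = (\<Sum>p\<in>P. t p) + (\<Sum>j\<in>L. t (f j))"
    using sum_by_opt_bins[OF assms(2), of "\<lambda>_. 1 :: real"] unfolding P_def L_def t_def by simp
  have weight_P: "sum U (R \<inter> opt_bin p) + a * t p \<le> real k * a + b" for p
  proof -
    have "a * t p = (\<Sum>i\<in>T \<inter> opt_bin p. a)" unfolding t_def by simp
    also have "\<dots> \<le> sum U (T \<inter> opt_bin p)"
      using assms(2,6) size_pos unfolding U_def by (intro sum_mono) (auto simp: less_imp_le)
    finally have "sum U (R \<inter> opt_bin p) + a * t p \<le> sum U ((R \<union> T) \<inter> opt_bin p)"
      using assms(3) finite_RT by (simp add: Int_Un_distrib2 sum.union_disjoint disjoint_iff)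
    also have "\<dots> \<le> real k * a + b"
      unfolding U_def by (rule weight_opt_bin_le) (use assms(5,6) in auto)
    finally show ?thesis .
  qed
  have weight_L: "sum U (R \<inter> opt_bin (f j)) \<le> a * r j + b / 2"
    and count_L: "r j + t (f j) \<le> real k - 1" if "j \<in> L" for j
  proof -
    have "sum U (R \<inter> opt_bin (f j)) = a * r j + b * sum v (R \<inter> opt_bin (f j))"
      unfolding U_def r_def by (simp add: sum.distrib sum_distrib_left)
    also have "\<dots> \<le> a * r j + b * (1/2)"
      using small_items_in_large_opt_bin(1)[of j R] that assms(1,4,6) unfolding L_def
      by (intro add_left_mono mult_left_mono) auto
    finally show "sum U (R \<inter> opt_bin (f j)) \<le> a * r j + b / 2" by simp
    have "card (R \<inter> opt_bin (f j)) + card (T \<inter> opt_bin (f j)) = card ((R \<union> T) \<inter> opt_bin (f j))"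
      using assms(3) finite_RT by (simp add: Int_Un_distrib2 card_Un_disjoint disjoint_iff)
    also have "\<dots> \<le> k - 1"
      using small_items_in_large_opt_bin(2)[of j "R \<union> T"] that assms(1,2,4) unfolding L_def by auto
    finally show "r j + t (f j) \<le> real k - 1" unfolding r_def t_def using assms(7) by linarith
  qed
  have "(\<Sum>j\<in>L. r j) \<le> real (card T) + (real k - 1)"
  proof -
    have "(\<Sum>j\<in>L. card (R \<inter> opt_bin (f j))) \<le> card T + (k - 1)"
      using charge unfolding L_def by (simp add: Int_commute)
    then show ?thesis using assms(7) unfolding r_def by (simp add: of_nat_diff flip: of_nat_sum)
  qed
  moreover have "(\<Sum>j\<in>L. r j) + (\<Sum>j\<in>L. t (f j)) \<le> (real k - 1) * real (card L)"
    using sum_mono[of L "\<lambda>j. r j + t (f j)" "\<lambda>_. real k - 1"] count_L by (simp add: sum.distrib mult.commute)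
  moreover have t_nonneg: "0 \<le> (\<Sum>p\<in>P. t p)" unfolding t_def by (simp add: sum_nonneg)
  ultimately have "2 * (\<Sum>j\<in>L. r j) \<le> (real k - 1) * real (card L) + (\<Sum>p\<in>P. t p) + (real k - 1)"
    using T_split by linarith
  then have "a * (2 * (\<Sum>j\<in>L. r j)) \<le> a * ((real k - 1) * real (card L) + (\<Sum>p\<in>P. t p) + (real k - 1))"
    using assms(5) by (rule mult_left_mono)
  moreover define X Y where "X = a * (\<Sum>j\<in>L. r j)" and "Y = a * (\<Sum>p\<in>P. t p)"
  ultimately have balance: "2 * X \<le> a * (real k - 1) * real (card L) + Y + a * (real k - 1)"
    by (simp add: algebra_simps)
  have "(\<Sum>p\<in>P. sum U (R \<inter> opt_bin p)) \<le> (\<Sum>p\<in>P. real k * a + b - a * t p)"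
    using weight_P by (intro sum_mono) (simp add: algebra_simps)
  moreover have "(\<Sum>j\<in>L. sum U (R \<inter> opt_bin (f j))) \<le> (\<Sum>j\<in>L. a * r j + b / 2)"
    using weight_L by (intro sum_mono) auto
  ultimately have "sum U R \<le> (real k * a + b) * real (card P) - Y + X + b / 2 * real (card L)"
    using R_split unfolding X_def Y_def by (simp add: sum.distrib sum_subtractf sum_distrib_left mult.commute)
  moreover have "real (card P) = real (card (f ` N)) - real (card L)"
    unfolding P_def L_def by (rule card_bins_without_large)
  moreover have "0 \<le> Y" unfolding Y_def using assms(5) t_nonneg by simp
  ultimately show ?thesis
    using balance unfolding L_def[symmetric] U_def by (simp add: field_simps)
qed


lemma mm_bins_small_weight_le:
  fixes a b :: real
  assumes "sorted_items v xs" "set xs = N" "2 \<le> k" "0 \<le> a" "0 \<le> b"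
  shows "(\<Sum>i\<in>small_bin_items v (mm_bins v k 0 [] xs). a + b * v i)
      \<le> (real k * a + b) * (real (card (f ` N)) - real (card (large_items v N)))
         + (a * (real k - 1) / 2 + b / 2) * real (card (large_items v N)) + a * (real k - 1) / 2"
proof -
  define bs where "bs = mm_bins v k 0 [] xs"
  have items: "set (concat bs) = N" unfolding bs_def set_concat_mm_bins assms(2) by simp
  have R_N: "small_bin_items v bs \<subseteq> N" using small_bin_items_subset[of v bs] items by simp
  have T_N: "large_bin_rest v bs \<subseteq> N" using large_bin_rest_subset[of v bs] items by simp
  have "mset (concat bs) = mset xs" unfolding bs_def by (simp add: mset_concat_mm_bins)
  then have "distinct (concat bs)"
    using assms(1) mset_eq_imp_distinct_iff unfolding sorted_items_def by blast
  then have disj: "small_bin_items v bs \<inter> large_bin_rest v bs = {}"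
    by (rule small_bin_items_large_bin_rest_disjoint)
  have small: "\<forall>i\<in>small_bin_items v bs \<union> large_bin_rest v bs. v i \<le> 1/2"
    using small_bin_items_le[of _ v bs] large_bin_rest_le[of _ v bs] by blast
  have "\<forall>j\<in>set xs. j \<in> opt_bin (f j) \<and> feasible_bin v k (opt_bin (f j))"
    using feasible assms(2) unfolding opt_bin_def by auto
  then have "(\<Sum>j\<in>large_items v N. card (opt_bin (f j) \<inter> small_bin_items v bs))
      \<le> card (large_bin_rest v bs) + (k - 1)"
    using large_items_opt_bins_small_le[OF assms(1,3)] assms(2) unfolding bs_def by simp
  moreover have "1 \<le> k" using assms(3) by simp
  ultimately show ?thesis
    using small_items_weight_le[OF R_N T_N disj small assms(4,5)] unfolding bs_def by blast
qed

end

lemma sort_eq_map_nth_sort_key: "sort xs = map (\<lambda>i. xs ! i) (sort_key (\<lambda>i. xs ! i) [0..<length xs])"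
proof -
  have "sort (map (\<lambda>i. xs ! i) [0..<length xs]) = map (\<lambda>i. xs ! i) (sort_key (\<lambda>i. xs ! i) [0..<length xs])"
    by (rule properties_for_sort) (simp_all add: mset_map)
  then show ?thesis by (simp add: map_nth)
qed

lemma MM_eq_mm_bins:
  "MM k I = length (filter (\<lambda>b. b \<noteq> []) (mm_bins (\<lambda>i. I ! i) k 0 [] (rev (sort_key (\<lambda>i. I ! i) [0..<length I]))))"
proof -
  have "rev (sort I) = map (\<lambda>i. I ! i) (rev (sort_key (\<lambda>i. I ! i) [0..<length I]))"
    by (simp add: sort_eq_map_nth_sort_key[of I] rev_map)
  then show ?thesis
    unfolding MM_def using mm_aux_map_eq_mm_bins[of k 0 "\<lambda>i. I ! i" "[]"] by (simp add: filter_map comp_def)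
qed

lemma sorted_items_sort_key:
  assumes "\<forall>x\<in>set I. 0 < x \<and> x \<le> 1"
  shows "sorted_items (\<lambda>i. I ! i) (rev (sort_key (\<lambda>i. I ! i) [0..<length I]))"
proof -
  have "sorted_wrt (\<lambda>i j. I ! i \<le> I ! j) (sort_key (\<lambda>i. I ! i) [0..<length I])"
    using sorted_sort_key[of "\<lambda>i. I ! i" "[0..<length I]"] by (simp add: sorted_wrt_map)
  then show ?thesis using assms unfolding sorted_items_def by (auto simp: sorted_wrt_rev)
qed

lemma OPT_attained:
  assumes "1 \<le> k" "\<forall>x\<in>set I. x \<le> 1"
  obtains f where "feasible_packing k I f" "used_bins I f = OPT k I"
proof -
  have "feasible_packing k I id"
    unfolding feasible_packing_def
  proof
    fix p
    have "{i. i < length I \<and> id i = p} = (if p < length I then {p} else {})" by auto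
    then show "card {i. i < length I \<and> id i = p} \<le> k \<and> (\<Sum>i\<in>{i. i < length I \<and> id i = p}. I ! i) \<le> 1"
      using assms by (auto simp: nth_mem)
  qed
  then show thesis
    using LeastI_ex[of "\<lambda>m. \<exists>f. feasible_packing k I f \<and> used_bins I f = m"] that unfolding OPT_def by blast
qed

lemma opt_packing_nth:
  assumes "feasible_packing k I f" "\<forall>x\<in>set I. 0 < x"
  shows "opt_packing (\<lambda>i. I ! i) k {..<length I} f"
proof
  have "{i. i < length I \<and> f i = p} = {i \<in> {..<length I}. f i = p}" for p by auto
  then show "feasible_bin (\<lambda>i. I ! i) k {i \<in> {..<length I}. f i = p}" for p
    using assms unfolding feasible_packing_def feasible_bin_def by (auto simp: less_imp_le)
qed (use assms(2) in auto)

lemma lambda_seq_ge: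
  assumes "3 \<le> k"
  shows "5/2 - 3 / real k \<le> lambda_seq k - 1 / real k"
proof -
  define g where "g i = max (1 / (real (pi_seq i) - 1)) (1 / real k)" for i
  have "pi_seq 1 = 2" "pi_seq 2 = 3" by (simp_all add: pi_seq_def numeral_2_eq_2)
  then have "g 1 = 1" "1/2 \<le> g 2" using assms unfolding g_def by (auto simp: max_def)
  have "{1..k} = insert 1 (insert 2 {3..k})" using assms by auto
  then have "lambda_seq k = g 1 + g 2 + sum g {3..k}" unfolding lambda_seq_def g_def by simp
  moreover have "(\<Sum>i\<in>{3..k}. 1 / real k) \<le> sum g {3..k}" unfolding g_def by (intro sum_mono) auto
  moreover have "(\<Sum>i\<in>{3..k}. 1 / real k) = 1 - 2 / real k"
    using assms by (simp add: of_nat_diff field_simps)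
  ultimately show ?thesis using \<open>g 1 = 1\<close> \<open>1/2 \<le> g 2\<close> by linarith
qed

lemma MM_le_weighted_OPT:
  fixes a b :: real
  assumes "2 \<le> k" "\<forall>x\<in>set I. 0 < x \<and> x \<le> 1"
    and "0 \<le> a" "0 \<le> b" "1 \<le> real k * a" "1 \<le> 2 * a + 2 * b / 3"
    and "1 + a * (real k - 1) / 2 + b / 2 \<le> real k * a + b"
  shows "real (MM k I) \<le> (real k * a + b) * real (OPT k I) + a * (real k - 1) / 2 + 1"
proof -
  define v where "v i = I ! i" for i
  define N where "N = {..<length I}"
  define xs where "xs = rev (sort_key v [0..<length I])"
  define L where "L = large_items v N"
  have sorted: "sorted_items v xs" using sorted_items_sort_key[OF assms(2)] unfolding xs_def v_def .
  have set_xs: "set xs = N" unfolding xs_def N_def by auto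
  obtain f where f: "feasible_packing k I f" "used_bins I f = OPT k I"
    using OPT_attained assms(1,2) by (metis le_trans one_le_numeral)
  interpret opt_packing v k N f
    using opt_packing_nth[OF f(1)] assms(2) unfolding v_def N_def by simp
  have OPT_eq: "OPT k I = card (f ` N)" using f(2) unfolding used_bins_def N_def by simp
  have "MM k I \<le> length (mm_bins v k 0 [] xs)"
    unfolding MM_eq_mm_bins xs_def v_def by (rule length_filter_le)
  moreover have "real (length (mm_bins v k 0 [] xs))
      \<le> real (card L) + (\<Sum>i\<in>small_bin_items v (mm_bins v k 0 [] xs). a + b * v i) + 1"
    using mm_bins_length_le[OF sorted assms(1,3-6)] set_xs unfolding L_def by simp
  ultimately have "real (MM k I) \<le> real (card L) + (real k * a + b) * (real (OPT k I) - real (card L))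
         + (a * (real k - 1) / 2 + b / 2) * real (card L) + a * (real k - 1) / 2 + 1"
    using mm_bins_small_weight_le[OF sorted set_xs assms(1,3,4)] unfolding OPT_eq L_def by linarith
  also have "\<dots> = (real k * a + b) * real (OPT k I) + a * (real k - 1) / 2 + 1
      - real (card L) * ((real k * a + b) - (1 + a * (real k - 1) / 2 + b / 2))"
    by (simp add: algebra_simps)
  also have "\<dots> \<le> (real k * a + b) * real (OPT k I) + a * (real k - 1) / 2 + 1"
    using assms(7) by simp
  finally show ?thesis .
qed

lemma MM_weight_parameters:
  assumes "3 \<le> k"
  obtains a b :: real where "0 \<le> a" "0 \<le> b" "1 \<le> real k * a" "1 \<le> 2 * a + 2 * b / 3"
    "1 + a * (real k - 1) / 2 + b / 2 \<le> real k * a + b"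
    "real k * a + b = 5/2 - 3 / real k" "a * (real k - 1) / 2 + 1 \<le> real k"
proof (cases "k = 3")
  case True
  show thesis by (rule that[of "1/2" 0]) (simp_all add: True)
next
  case False
  then have "4 \<le> real k" using assms by simp
  moreover have "1 / real k * (real k - 1) / 2 + 1 \<le> real k"
  proof -
    have "1 / real k * (real k - 1) \<le> 1" using \<open>4 \<le> real k\<close> by (simp add: field_simps)
    then have "1 / real k * (real k - 1) / 2 \<le> 1 / 2" by (intro divide_right_mono) simp_all
    then show ?thesis using \<open>4 \<le> real k\<close> by linarith
  qed
  ultimately show thesis
    by (intro that[of "1 / real k" "3/2 - 3 / real k"]; simp add: field_simps)
qed

theorem theorem8:
  fixes k :: nat and I :: "real list"
  assumes "k \<ge> 3"
    and "\<forall>x\<in>set I. 0 < x \<and> x \<le> 1"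
  shows "real (MM k I) \<le> (lambda_seq k - 1 / real k) * real (OPT k I) + real k"
proof -
  obtain a b :: real where ab: "0 \<le> a" "0 \<le> b" "1 \<le> real k * a" "1 \<le> 2 * a + 2 * b / 3"
    "1 + a * (real k - 1) / 2 + b / 2 \<le> real k * a + b"
    and ratio: "real k * a + b = 5/2 - 3 / real k" and additive: "a * (real k - 1) / 2 + 1 \<le> real k"
    using MM_weight_parameters[OF assms(1)] by blast
  have "real (MM k I) \<le> (real k * a + b) * real (OPT k I) + a * (real k - 1) / 2 + 1"
    using MM_le_weighted_OPT[OF _ assms(2) ab] assms(1) by simp
  moreover have "(real k * a + b) * real (OPT k I) \<le> (lambda_seq k - 1 / real k) * real (OPT k I)"
    using lambda_seq_ge[OF assms(1)] ratio by (intro mult_right_mono) simp_all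
  ultimately show ?thesis using additive by linarith
qed

end
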